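(* Let $s\ge 2$ and consider anisotropic bond percolation on $\mathbb{Z}\times\mathbb{Z}^s$ with parameters $(p,q)$. There exist $\alpha>0$ and $p_0<1$ with the following property. If $p\in(p_0,1)$ and $$q>\alpha\,\frac{1-p}{1+p},$$ then $\mathbb{P}_{p,q}$-almost surely there is an infinite open cluster in $\mathbb{Z}^{1+s}$; in particular $\theta(p,q)>0$.
   Context: $\mathbb{Z}^{1+s}=\mathbb{Z}\times\mathbb{Z}^s$ is the nearest-neighbour graph on $\mathbb{Z}^{1+s}$. An edge is a $\mathbb{Z}$-edge if its two endpoints differ only in their first ($\mathbb{Z}$) coordinate, and a $\mathbb{Z}^s$-edge if they differ only in their $\mathbb{Z}^s$ component. Under $\mathbb{P}_{p,q}$ each $\mathbb{Z}$-edge is open with probability $p$ and each $\mathbb{Z}^s$-edge is open with probability $q$, independently of all other edges. $\theta(p,q)$ is the $\mathbb{P}_{p,q}$-probability that the open cluster of the origin is infinite. *)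

theory Defs
  imports "HOL-Probability.Probability"
begin

text \<open>Vertices of Z x Z^s, where Z^s is modelled as functions from a finite
type 'n (with CARD('n) = s) to int.\<close>
type_synonym 'n vertex = "int \<times> ('n \<Rightarrow> int)"

text \<open>Directions: None is the Z-direction, Some i is the i-th Z^s direction.
An edge (x, d) joins x and x + e_d; every nearest-neighbour edge arises exactly once.\<close>
type_synonym 'n edge = "'n vertex \<times> 'n option"

fun step :: "'n option \<Rightarrow> 'n vertex \<Rightarrow> 'n vertex" where
  "step None (z, v) = (z + 1, v)"
| "step (Some i) (z, v) = (z, v(i := v i + 1))"

definition open_adj :: "('n edge \<Rightarrow> bool) \<Rightarrow> 'n vertex \<Rightarrow> 'n vertex \<Rightarrow> bool" where
  "open_adj \<omega> x y \<longleftrightarrow>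
     (\<exists>d. y = step d x \<and> \<omega> (x, d)) \<or> (\<exists>d. x = step d y \<and> \<omega> (y, d))"

definition cluster :: "('n edge \<Rightarrow> bool) \<Rightarrow> 'n vertex \<Rightarrow> 'n vertex set" where
  "cluster \<omega> x = {y. (open_adj \<omega>)\<^sup>*\<^sup>* x y}"

definition perc :: "real \<Rightarrow> real \<Rightarrow> ('n edge \<Rightarrow> bool) measure" where
  "perc p q = PiM UNIV (\<lambda>e. measure_pmf (bernoulli_pmf (if snd e = None then p else q)))"

definition origin :: "'n vertex" where
  "origin = (0, \<lambda>_. 0)"

definition theta :: "'n itself \<Rightarrow> real \<Rightarrow> real \<Rightarrow> real" where
  "theta _ p q = measure (perc p q :: ('n edge \<Rightarrow> bool) measure)
                   {\<omega> \<in> space (perc p q). infinite (cluster \<omega> (origin :: 'n vertex))}"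

end

theory Submission
  imports Defs
begin

text \<open>
  Coarse-grain along the Z-direction inside one plane. A segment of l consecutive Z-edges,
  together with at least one of its l rungs to the next segment, fails with probability at most
  l (1 - p) + (1 - q)^l, and neighbouring good segments are connected. When p is close to 1 and
  q > \<alpha> (1 - p) / (1 + p), some l makes this at most 2^-24, so the good segments form an
  independent, very dense site percolation on Z^2.

  For that site percolation a multiscale argument applies. A block of level k + 1 is made of
  13 x 13 overlapping blocks of level k and counts as bad only if two far apart, hence disjoint
  and independent, sub-blocks are bad; so a level-k block is bad with probability at most
  2^-(k + 16). The bad sub-blocks of a good block fit in a small square, so the cores of its good
  inner sub-blocks can be chained together: a good block of level k contains a connected set of at
  least 2^k open sites. Along a nested sequence of blocks all levels are eventually good almost
  surely (Borel-Cantelli), which gives an infinite cluster, and with positive probability all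
  levels are good, which puts the origin in it.
\<close>

lemma rtranclp_int_chain:
  fixes a b :: int
  assumes "a \<le> b" and "\<And>t. a \<le> t \<Longrightarrow> t < b \<Longrightarrow> r (f t) (f (t + 1))"
  shows "r\<^sup>*\<^sup>* (f a) (f b)"
  using assms
proof (induction b rule: int_ge_induct)
  case base
  then show ?case by simp
next
  case (step b)
  then show ?case
    by (metis less_add_one order_less_trans order.refl rtranclp.rtrancl_into_rtrancl)
qed

lemma rtranclp_int_chain_symp:
  fixes a b :: int
  assumes "symp r" and "\<And>t. min a b \<le> t \<Longrightarrow> t < max a b \<Longrightarrow> r (f t) (f (t + 1))"
  shows "r\<^sup>*\<^sup>* (f a) (f b)"
proof (cases "a \<le> b")
  case True
  then show ?thesis using assms(2) by (intro rtranclp_int_chain) auto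
next
  case False
  then have "r\<^sup>*\<^sup>* (f b) (f a)" using assms(2) by (intro rtranclp_int_chain) auto
  then show ?thesis by (rule sympD[OF symp_rtranclp[OF assms(1)]])
qed

lemma rtranclp_map:
  assumes "r\<^sup>*\<^sup>* x y" and "\<And>u v. r u v \<Longrightarrow> s\<^sup>*\<^sup>* (f u) (f v)"
  shows "s\<^sup>*\<^sup>* (f x) (f y)"
  using assms(1) by induction (auto intro: rtranclp_trans assms(2))

definition lattice_adj :: "(int \<times> int) set \<Rightarrow> int \<times> int \<Rightarrow> int \<times> int \<Rightarrow> bool" where
  "lattice_adj S x y \<longleftrightarrow> x \<in> S \<and> y \<in> S \<and> \<bar>fst x - fst y\<bar> + \<bar>snd x - snd y\<bar> = 1"

lemma symp_lattice_adj: "symp (lattice_adj S)"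
  by (auto simp: symp_def lattice_adj_def abs_minus_commute)

lemma lattice_adj_rtranclp_in_rectangle:
  assumes "{a0..<a1} \<times> {b0..<b1} \<subseteq> S"
    and "x \<in> {a0..<a1} \<times> {b0..<b1}" and "y \<in> {a0..<a1} \<times> {b0..<b1}"
  shows "(lattice_adj S)\<^sup>*\<^sup>* x y"
proof -
  obtain i j i' j' where xy: "x = (i, j)" "y = (i', j')" by (cases x, cases y)
  have "(lattice_adj S)\<^sup>*\<^sup>* (i, j) (i', j)"
    using assms xy by (intro rtranclp_int_chain_symp[OF symp_lattice_adj, where f = "\<lambda>t. (t, j)"])
      (auto simp: lattice_adj_def subset_iff min_def max_def split: if_splits)
  moreover have "(lattice_adj S)\<^sup>*\<^sup>* (i', j) (i', j')"
    using assms xy by (intro rtranclp_int_chain_symp[OF symp_lattice_adj, where f = "\<lambda>t. (i', t)"])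
      (auto simp: lattice_adj_def subset_iff min_def max_def split: if_splits)
  ultimately show ?thesis using xy by (metis rtranclp_trans)
qed

section \<open>Multiscale renormalisation of a site configuration on \<open>\<int>\<^sup>2\<close>\<close>

definition scale :: "nat \<Rightarrow> int" where
  "scale k = 4 ^ (k + 1)"

definition block :: "nat \<Rightarrow> int \<times> int \<Rightarrow> (int \<times> int) set" where
  "block k c = {fst c..<fst c + 4 * scale k} \<times> {snd c..<snd c + 4 * scale k}"

definition subcorner :: "nat \<Rightarrow> int \<times> int \<Rightarrow> int \<times> int \<Rightarrow> int \<times> int" where
  "subcorner k c P = (fst c + fst P * scale k, snd c + snd P * scale k)"

definition sub_indices :: "(int \<times> int) set" where
  "sub_indices = {0..12} \<times> {0..12}"

definition inner_indices :: "(int \<times> int) set" where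
  "inner_indices = {2..10} \<times> {2..10}"

definition far :: "int \<times> int \<Rightarrow> int \<times> int \<Rightarrow> bool" where
  "far P Q \<longleftrightarrow> 3 < \<bar>fst P - fst Q\<bar> \<or> 3 < \<bar>snd P - snd Q\<bar>"

fun bad_block :: "nat \<Rightarrow> int \<times> int \<Rightarrow> (int \<times> int) set \<Rightarrow> bool" where
  "bad_block 0 c S \<longleftrightarrow> \<not> block 0 c \<subseteq> S"
| "bad_block (Suc k) c S \<longleftrightarrow> (\<exists>P\<in>sub_indices. \<exists>Q\<in>sub_indices.
     far P Q \<and> bad_block k (subcorner k c P) S \<and> bad_block k (subcorner k c Q) S)"

fun core :: "nat \<Rightarrow> int \<times> int \<Rightarrow> (int \<times> int) set \<Rightarrow> (int \<times> int) set" where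
  "core 0 c S = block 0 c"
| "core (Suc k) c S =
     (\<Union>P\<in>{P \<in> inner_indices. \<not> bad_block k (subcorner k c P) S}. core k (subcorner k c P) S)"

lemma scale_Suc: "scale (Suc k) = 4 * scale k"
  by (simp add: scale_def)

lemma scale_ge_4: "4 \<le> scale k"
  unfolding scale_def using power_increasing[of 1 "k + 1" "4::int"] by simp

lemma inner_subset_sub_indices: "inner_indices \<subseteq> sub_indices"
  by (auto simp: inner_indices_def sub_indices_def)

lemma corner_in_block: "c \<in> block k c"
  using scale_ge_4[of k] by (cases c) (auto simp: block_def)

lemma finite_block: "finite (block k c)"
  by (simp add: block_def)

lemma card_block_0: "card (block 0 c) = 256"
  by (simp add: block_def scale_def)

lemma subblock_subset:
  assumes "P \<in> sub_indices"
  shows "block k (subcorner k c P) \<subseteq> block (Suc k) c"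
proof
  fix x assume "x \<in> block k (subcorner k c P)"
  then have "fst c + fst P * scale k \<le> fst x" "fst x < fst c + fst P * scale k + 4 * scale k"
    "snd c + snd P * scale k \<le> snd x" "snd x < snd c + snd P * scale k + 4 * scale k"
    by (auto simp: block_def subcorner_def mem_Times_iff)
  moreover have "0 \<le> fst P * scale k" "fst P * scale k \<le> 12 * scale k"
    "0 \<le> snd P * scale k" "snd P * scale k \<le> 12 * scale k"
    using assms scale_ge_4[of k] by (auto simp: sub_indices_def intro: mult_right_mono)
  ultimately show "x \<in> block (Suc k) c"
    unfolding block_def scale_Suc mem_Times_iff atLeastLessThan_iff by (intro conjI; linarith)
qed

lemma far_subblocks_disjoint:
  assumes "far P Q"
  shows "block k (subcorner k c P) \<inter> block k (subcorner k c Q) = {}"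
proof (rule equals0I)
  fix x assume "x \<in> block k (subcorner k c P) \<inter> block k (subcorner k c Q)"
  then have "fst c + fst P * scale k \<le> fst x" "fst x < fst c + fst P * scale k + 4 * scale k"
    "fst c + fst Q * scale k \<le> fst x" "fst x < fst c + fst Q * scale k + 4 * scale k"
    "snd c + snd P * scale k \<le> snd x" "snd x < snd c + snd P * scale k + 4 * scale k"
    "snd c + snd Q * scale k \<le> snd x" "snd x < snd c + snd Q * scale k + 4 * scale k"
    by (auto simp: block_def subcorner_def mem_Times_iff)
  then have close: "\<bar>fst P * scale k - fst Q * scale k\<bar> < 4 * scale k"
    "\<bar>snd P * scale k - snd Q * scale k\<bar> < 4 * scale k"
    unfolding abs_less_iff by linarith+
  have scaled: "4 * scale k \<le> \<bar>i * scale k - j * scale k\<bar>" if "3 < \<bar>i - j\<bar>" for i j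
  proof -
    have "4 * scale k \<le> \<bar>i - j\<bar> * scale k"
      using that scale_ge_4[of k] by (intro mult_right_mono) auto
    also have "\<dots> = \<bar>i * scale k - j * scale k\<bar>"
      using scale_ge_4[of k] by (simp add: abs_mult left_diff_distrib[symmetric])
    finally show ?thesis .
  qed
  show False
  proof (cases "3 < \<bar>fst P - fst Q\<bar>")
    case True
    then show False using close(1) scaled[OF True] by (metis leD)
  next
    case False
    then have "3 < \<bar>snd P - snd Q\<bar>" using assms by (simp add: far_def)
    then show False using close(2) scaled[of "snd P" "snd Q"] by (metis leD)
  qed
qed

lemma core_subset_block: "core k c S \<subseteq> block k c"
proof (induction k arbitrary: c)
  case 0
  then show ?case by simp
next
  case (Suc k)
  show ?case
  proof
    fix x assume "x \<in> core (Suc k) c S"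
    then obtain P where "P \<in> inner_indices" "x \<in> core k (subcorner k c P) S" by auto
    then show "x \<in> block (Suc k) c"
      using Suc.IH subblock_subset inner_subset_sub_indices by blast
  qed
qed

lemma finite_core: "finite (core k c S)"
  using finite_subset[OF core_subset_block finite_block] .

lemma bad_block_cong:
  assumes "S \<inter> block k c = S' \<inter> block k c"
  shows "bad_block k c S = bad_block k c S'"
  using assms
proof (induction k arbitrary: c)
  case 0
  then show ?case by auto
next
  case (Suc k)
  have "bad_block k (subcorner k c P) S = bad_block k (subcorner k c P) S'" if "P \<in> sub_indices" for P
    using Suc.IH Suc.prems subblock_subset[OF that] by blast
  then show ?case by auto
qed

lemma good_of_far_subblocks:
  assumes "\<not> bad_block (Suc k) c S" "P \<in> sub_indices" "Q \<in> sub_indices" "far P Q"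
  shows "\<not> bad_block k (subcorner k c P) S \<or> \<not> bad_block k (subcorner k c Q) S"
  using assms unfolding bad_block.simps by blast

lemma two_far_good_subblocks:
  assumes "\<not> bad_block (Suc k) c S"
  obtains P Q where "P \<in> inner_indices" "Q \<in> inner_indices" "far P Q"
    "\<not> bad_block k (subcorner k c P) S" "\<not> bad_block k (subcorner k c Q) S"
proof -
  have indices: "(2, 2) \<in> inner_indices" "(6, 2) \<in> inner_indices" "(10, 2) \<in> inner_indices"
    and far: "far (2, 2) (6, 2)" "far (2, 2) (10, 2)" "far (6, 2) (10, 2)"
    by (auto simp: inner_indices_def far_def)
  have good: "\<not> bad_block k (subcorner k c P) S \<or> \<not> bad_block k (subcorner k c Q) S"
    if "P \<in> inner_indices" "Q \<in> inner_indices" "far P Q" for P Q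
    using good_of_far_subblocks[OF assms] that inner_subset_sub_indices by blast
  show ?thesis
  proof (cases "bad_block k (subcorner k c (2, 2)) S")
    case True
    then show ?thesis
      using that[OF indices(2,3) far(3)] good[OF indices(1,2) far(1)] good[OF indices(1,3) far(2)]
      by blast
  next
    case False
    then show ?thesis
      using that[OF indices(1,2) far(1)] that[OF indices(1,3) far(2)] good[OF indices(2,3) far(3)]
      by blast
  qed
qed

lemma card_core:
  assumes "\<not> bad_block k c S"
  shows "2 ^ k \<le> card (core k c S)"
  using assms
proof (induction k arbitrary: c)
  case 0
  then show ?case
    using card_block_0[of c] by simp
next
  case (Suc k)
  obtain P Q where PQ: "P \<in> inner_indices" "Q \<in> inner_indices" "far P Q"
    "\<not> bad_block k (subcorner k c P) S" "\<not> bad_block k (subcorner k c Q) S"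
    using two_far_good_subblocks[OF Suc.prems] .
  have disjoint: "core k (subcorner k c P) S \<inter> core k (subcorner k c Q) S = {}"
    using far_subblocks_disjoint[OF PQ(3)] core_subset_block by blast
  have "2 ^ Suc k \<le> card (core k (subcorner k c P) S) + card (core k (subcorner k c Q) S)"
    using Suc.IH[OF PQ(4)] Suc.IH[OF PQ(5)] by simp
  also have "\<dots> = card (core k (subcorner k c P) S \<union> core k (subcorner k c Q) S)"
    using disjoint by (simp add: card_Un_disjoint finite_core)
  also have "\<dots> \<le> card (core (Suc k) c S)"
    using PQ by (intro card_mono finite_core) auto
  finally show ?case .
qed

lemma core_nonempty: "\<not> bad_block k c S \<Longrightarrow> core k c S \<noteq> {}"
  using card_core[of k c S] by force

lemma good_subblock_core_subset:
  "P \<in> inner_indices \<Longrightarrow> \<not> bad_block k (subcorner k c P) S \<Longrightarrow>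
    core k (subcorner k c P) S \<subseteq> core (Suc k) c S"
  by auto

text \<open>\<open>ax d 0\<close> is the offset \<open>d\<close> along the first axis (\<open>ax = Pair\<close>) or the second one.\<close>

lemma cores_of_aligned_good_blocks_meet:
  assumes axis: "ax \<in> {Pair, \<lambda>i j. (j, i)}" and "\<bar>d\<bar> \<le> 2"
    and good: "\<not> bad_block k c S" "\<not> bad_block k (subcorner k c (ax d 0)) S"
  shows "core k c S \<inter> core k (subcorner k c (ax d 0)) S \<noteq> {}"
proof (cases k)
  case 0
  have "subcorner k c (ax d 0) \<in> block 0 c \<or> c \<in> block 0 (subcorner k c (ax d 0))"
    using axis \<open>\<bar>d\<bar> \<le> 2\<close> 0 by (cases "0 \<le> d") (auto simp: block_def subcorner_def scale_def mem_Times_iff)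
  then show ?thesis
    using 0 corner_in_block[of c 0] corner_in_block[of "subcorner k c (ax d 0)" 0] by auto
next
  case (Suc m)
  \<comment> \<open>Sub-block \<open>ax i j\<close> of the first block is sub-block \<open>ax (i - 4 d) j\<close> of the second;
    one of the far rows \<open>j = 2, 6\<close> is good.\<close>
  define i where "i = (if 0 \<le> d then 2 + 4 * d else 2)"
  have "d \<in> {-2, -1, 0, 1, 2}" using \<open>\<bar>d\<bar> \<le> 2\<close> by auto
  then have i: "i \<in> {2, 6, 10}" "i - 4 * d \<in> {2, 6, 10}" by (auto simp: i_def)
  have "ax i 2 \<in> sub_indices" "ax i 6 \<in> sub_indices" "far (ax i 2) (ax i 6)"
    using axis i by (auto simp: sub_indices_def far_def)
  then obtain j where j: "j \<in> {2, 6}" "\<not> bad_block m (subcorner m c (ax i j)) S"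
    using good_of_far_subblocks good(1) Suc by blast
  have inner: "ax i j \<in> inner_indices" "ax (i - 4 * d) j \<in> inner_indices"
    using axis i j by (auto simp: inner_indices_def)
  define c' where "c' = subcorner k c (ax d 0)"
  have same: "subcorner m c' (ax (i - 4 * d) j) = subcorner m c (ax i j)"
    using axis Suc by (auto simp: c'_def subcorner_def scale_Suc algebra_simps)
  have "core m (subcorner m c (ax i j)) S \<subseteq> core k c S"
    using good_subblock_core_subset[OF inner(1)] j unfolding Suc by simp
  moreover have "core m (subcorner m c (ax i j)) S \<subseteq> core k c' S"
    using good_subblock_core_subset[OF inner(2), of m c' S] j unfolding same Suc by simp
  moreover have "core m (subcorner m c (ax i j)) S \<noteq> {}"
    using core_nonempty j by blast
  ultimately have "core k c S \<inter> core k c' S \<noteq> {}" by blast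
  then show ?thesis by (simp add: c'_def)
qed

text \<open>Steps of length 2 let a path of good sub-blocks jump over a bad row or column.\<close>

definition hop :: "(int \<times> int) set \<Rightarrow> int \<times> int \<Rightarrow> int \<times> int \<Rightarrow> bool" where
  "hop B P Q \<longleftrightarrow> P \<in> sub_indices - B \<and> Q \<in> sub_indices - B \<and>
     (fst P = fst Q \<and> \<bar>snd P - snd Q\<bar> \<le> 2 \<or> snd P = snd Q \<and> \<bar>fst P - fst Q\<bar> \<le> 2)"

lemma symp_hop: "symp (hop B)"
  by (auto simp: symp_def hop_def abs_minus_commute)

lemma clustered_avoids_one_of_far_lines:
  assumes "\<forall>P\<in>B. \<forall>Q\<in>B. \<not> far P Q" and "3 < \<bar>a - b\<bar>"
  shows "(\<forall>Q\<in>B. fst Q \<noteq> a) \<or> (\<forall>Q\<in>B. fst Q \<noteq> b)"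
    and "(\<forall>Q\<in>B. snd Q \<noteq> a) \<or> (\<forall>Q\<in>B. snd Q \<noteq> b)"
  using assms unfolding far_def by blast+

lemma hop_connected:
  assumes clustered: "\<forall>P\<in>B. \<forall>Q\<in>B. \<not> far P Q"
    and "P \<in> inner_indices - B" "Q \<in> inner_indices - B"
  shows "(hop B)\<^sup>*\<^sup>* P Q"
proof -
  \<comment> \<open>\<open>B\<close> lies in a \<open>4 \<times> 4\<close> square, so it misses row \<open>0\<close> or row \<open>12\<close>, and column \<open>i - 2\<close> or \<open>i + 2\<close>.\<close>
  obtain r where r: "r \<in> {0, 12}" "\<forall>Q\<in>B. snd Q \<noteq> r"
    using clustered_avoids_one_of_far_lines(2)[OF clustered, of 0 12] by auto
  have to_hub: "(hop B)\<^sup>*\<^sup>* (i, j) (0, r)" if "(i, j) \<in> inner_indices - B" for i j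
  proof -
    obtain c where c: "c \<in> {i - 2, i + 2}" "\<forall>Q\<in>B. fst Q \<noteq> c"
      using clustered_avoids_one_of_far_lines(1)[OF clustered, of "i - 2" "i + 2"] by auto
    have ij: "2 \<le> i" "i \<le> 10" "2 \<le> j" "j \<le> 10" "(i, j) \<notin> B"
      using that by (auto simp: inner_indices_def)
    then have "hop B (i, j) (c, j)"
      using c by (auto simp: hop_def sub_indices_def)
    moreover have "(hop B)\<^sup>*\<^sup>* (c, j) (c, r)"
      using c ij r by (intro rtranclp_int_chain_symp[OF symp_hop, where f = "\<lambda>t. (c, t)"])
        (auto simp: hop_def sub_indices_def)
    moreover have "(hop B)\<^sup>*\<^sup>* (c, r) (0, r)"
      using c ij r by (intro rtranclp_int_chain_symp[OF symp_hop, where f = "\<lambda>t. (t, r)"])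
        (auto simp: hop_def sub_indices_def)
    ultimately show ?thesis
      by (meson converse_rtranclp_into_rtranclp rtranclp_trans)
  qed
  show ?thesis
    using to_hub[of "fst P" "snd P"] to_hub[of "fst Q" "snd Q"] assms(2,3)
    by (metis prod.collapse rtranclp_trans sympD[OF symp_rtranclp[OF symp_hop]])
qed

lemma subcorner_subcorner:
  "subcorner k (subcorner k c P) D = subcorner k c (fst P + fst D, snd P + snd D)"
  by (simp add: subcorner_def algebra_simps)

lemma cores_of_hop_meet:
  assumes "hop B P Q"
    and good: "\<not> bad_block k (subcorner k c P) S" "\<not> bad_block k (subcorner k c Q) S"
  shows "core k (subcorner k c P) S \<inter> core k (subcorner k c Q) S \<noteq> {}"
proof -
  obtain ax d where ax: "ax \<in> {Pair, \<lambda>i j. (j, i)}" "\<bar>d\<bar> \<le> 2"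
    and Q: "subcorner k c Q = subcorner k (subcorner k c P) (ax d 0)"
  proof (cases "fst P = fst Q")
    case True
    then show ?thesis
      using assms(1) that[of "\<lambda>i j. (j, i)" "snd Q - snd P"]
      by (auto simp: hop_def subcorner_subcorner abs_minus_commute)
  next
    case False
    then show ?thesis
      using assms(1) that[of Pair "fst Q - fst P"]
      by (auto simp: hop_def subcorner_subcorner abs_minus_commute)
  qed
  show ?thesis
    using cores_of_aligned_good_blocks_meet[OF ax, of k "subcorner k c P" S] good unfolding Q by blast
qed

lemma core_connected:
  assumes "\<not> bad_block k c S" "x \<in> core k c S" "y \<in> core k c S"
  shows "(lattice_adj S)\<^sup>*\<^sup>* x y"
  using assms
proof (induction k arbitrary: c x y)
  case 0
  then show ?case
    by (intro lattice_adj_rtranclp_in_rectangle[of "fst c" _ "snd c"]) (auto simp: block_def)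
next
  case (Suc k)
  define B where "B = {P \<in> sub_indices. bad_block k (subcorner k c P) S}"
  have clustered: "\<forall>P\<in>B. \<forall>Q\<in>B. \<not> far P Q"
    using Suc.prems(1) by (auto simp: B_def)
  obtain X where X: "X \<in> inner_indices" "\<not> bad_block k (subcorner k c X) S"
    "x \<in> core k (subcorner k c X) S"
    using Suc.prems(2) by auto
  obtain Y where Y: "Y \<in> inner_indices" "\<not> bad_block k (subcorner k c Y) S"
    "y \<in> core k (subcorner k c Y) S"
    using Suc.prems(3) by auto
  have "(hop B)\<^sup>*\<^sup>* X Y"
    using hop_connected[OF clustered] X Y by (auto simp: B_def)
  then have "\<forall>z\<in>core k (subcorner k c Y) S. (lattice_adj S)\<^sup>*\<^sup>* x z"
  proof (induction rule: rtranclp_induct)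
    case base
    then show ?case using Suc.IH X by blast
  next
    case (step Z W)
    have good: "\<not> bad_block k (subcorner k c Z) S" "\<not> bad_block k (subcorner k c W) S"
      using step.hyps(2) by (auto simp: hop_def B_def)
    obtain w where w: "w \<in> core k (subcorner k c Z) S" "w \<in> core k (subcorner k c W) S"
      using cores_of_hop_meet[OF step.hyps(2) good] by blast
    show ?case
      using step.IH w Suc.IH[OF good(2) w(2)] by (meson rtranclp_trans)
  qed
  then show ?case using Y by blast
qed

text \<open>Each block of the nested sequence is the \<open>(6, 6)\<close> sub-block of the next one.\<close>

fun nested_corner :: "nat \<Rightarrow> int \<times> int" where
  "nested_corner 0 = (0, 0)"
| "nested_corner (Suc k) = (fst (nested_corner k) - 6 * scale k, snd (nested_corner k) - 6 * scale k)"

lemma core_nested_corner_mono: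
  assumes "\<forall>k\<ge>K. \<not> bad_block k (nested_corner k) S" "K \<le> k"
  shows "core K (nested_corner K) S \<subseteq> core k (nested_corner k) S"
  using assms(2)
proof (induction k rule: dec_induct)
  case base
  then show ?case by simp
next
  case (step k)
  have corner: "subcorner k (nested_corner (Suc k)) (6, 6) = nested_corner k"
    by (simp add: subcorner_def)
  have "(6, 6) \<in> inner_indices"
    by (simp add: inner_indices_def)
  moreover have "\<not> bad_block k (nested_corner k) S"
    using assms(1) step.hyps(1) by blast
  ultimately have "core k (nested_corner k) S \<subseteq> core (Suc k) (nested_corner (Suc k)) S"
    using good_subblock_core_subset[of "(6, 6)" k "nested_corner (Suc k)" S] unfolding corner by blast
  then show ?case using step.IH by blast
qed

lemma infinite_lattice_cluster:
  assumes good: "\<forall>k\<ge>K. \<not> bad_block k (nested_corner k) S"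
    and x: "x \<in> core K (nested_corner K) S"
  shows "infinite {y. (lattice_adj S)\<^sup>*\<^sup>* x y}"
proof
  assume finite: "finite {y. (lattice_adj S)\<^sup>*\<^sup>* x y}"
  define k where "k = max K (card {y. (lattice_adj S)\<^sup>*\<^sup>* x y})"
  have "K \<le> k" by (simp add: k_def)
  then have "core k (nested_corner k) S \<subseteq> {y. (lattice_adj S)\<^sup>*\<^sup>* x y}"
    using core_connected core_nested_corner_mono[OF good] good x by blast
  then have "2 ^ k \<le> card {y. (lattice_adj S)\<^sup>*\<^sup>* x y}"
    using card_core good \<open>K \<le> k\<close> card_mono[OF finite] order_trans by blast
  also have "\<dots> \<le> k" by (simp add: k_def)
  finally show False
    using less_exp[of k] by linarith
qed

section \<open>Independent Bernoulli fields\<close>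

definition bernoulli_field :: "('e \<Rightarrow> real) \<Rightarrow> ('e \<Rightarrow> bool) measure" where
  "bernoulli_field r = PiM UNIV (\<lambda>e. measure_pmf (bernoulli_pmf (r e)))"

definition determined_by :: "'e set \<Rightarrow> (('e \<Rightarrow> bool) \<Rightarrow> bool) \<Rightarrow> bool" where
  "determined_by J f \<longleftrightarrow> (\<forall>\<omega> \<omega>'. (\<forall>e\<in>J. \<omega> e = \<omega>' e) \<longrightarrow> f \<omega> = f \<omega>')"

lemma determined_byD:
  "determined_by J f \<Longrightarrow> (\<And>e. e \<in> J \<Longrightarrow> \<omega> e = \<omega>' e) \<Longrightarrow> f \<omega> = f \<omega>'"
  unfolding determined_by_def by blast

lemma determined_by_not: "determined_by J f \<Longrightarrow> determined_by J (\<lambda>\<omega>. \<not> f \<omega>)"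
  unfolding determined_by_def by blast

lemma product_prob_space_bernoulli:
  "product_prob_space (\<lambda>e. measure_pmf (bernoulli_pmf (r e)))"
  by (auto simp: product_prob_space_def product_prob_space_axioms_def product_sigma_finite_def
      prob_space_measure_pmf prob_space_imp_sigma_finite)

lemma prob_space_bernoulli_field: "prob_space (bernoulli_field r)"
  unfolding bernoulli_field_def by (intro prob_space_PiM prob_space_measure_pmf)

lemma space_bernoulli_field [simp]: "space (bernoulli_field r) = UNIV"
  by (simp add: bernoulli_field_def space_PiM)

lemma pred_PiM_coordinate:
  fixes M :: "'e \<Rightarrow> bool measure"
  assumes "e \<in> I" "\<And>e. sets (M e) = UNIV"
  shows "Measurable.pred (PiM I M) (\<lambda>\<omega>. \<omega> e)"
proof -
  have "measurable (PiM I M) (M e) = measurable (PiM I M) (count_space UNIV)"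
    using assms(2) by (intro measurable_cong_sets) simp_all
  then show ?thesis
    using measurable_component_singleton[OF assms(1), of M] by simp
qed

lemma pred_PiM_determined_by:
  fixes M :: "'e \<Rightarrow> bool measure"
  assumes "finite J" "J \<subseteq> I" "determined_by J f" "\<And>e. sets (M e) = UNIV"
  shows "Measurable.pred (PiM I M) f"
proof -
  \<comment> \<open>A finite disjunction over the configurations on \<open>J\<close>.\<close>
  have "f \<omega> \<longleftrightarrow> (\<exists>v\<in>Pow J. f (\<lambda>e. e \<in> v) \<and> (\<forall>e\<in>J. \<omega> e = (e \<in> v)))" for \<omega>
  proof
    assume "f \<omega>"
    moreover have "f \<omega> = f (\<lambda>e. e \<in> {e \<in> J. \<omega> e})"
      by (rule determined_byD[OF assms(3)]) simp
    ultimately show "\<exists>v\<in>Pow J. f (\<lambda>e. e \<in> v) \<and> (\<forall>e\<in>J. \<omega> e = (e \<in> v))"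
      by (intro bexI[of _ "{e \<in> J. \<omega> e}"]) auto
  next
    assume "\<exists>v\<in>Pow J. f (\<lambda>e. e \<in> v) \<and> (\<forall>e\<in>J. \<omega> e = (e \<in> v))"
    then obtain v where "f (\<lambda>e. e \<in> v)" "\<forall>e\<in>J. \<omega> e = (e \<in> v)" by blast
    then show "f \<omega>"
      using determined_byD[OF assms(3), of \<omega> "\<lambda>e. e \<in> v"] by simp
  qed
  then have "f = (\<lambda>\<omega>. \<exists>v\<in>Pow J. f (\<lambda>e. e \<in> v) \<and> (\<forall>e\<in>J. \<omega> e = (e \<in> v)))"
    by (rule ext)
  also have "Measurable.pred (PiM I M) \<dots>"
    using assms(1,2,4)
    by (intro pred_intros_finite pred_intros_logic measurable_const pred_PiM_coordinate) auto
  finally show ?thesis .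
qed

lemma pred_bernoulli_field_coordinate: "Measurable.pred (bernoulli_field r) (\<lambda>\<omega>. \<omega> e)"
  unfolding bernoulli_field_def by (rule pred_PiM_coordinate) simp_all

lemma sets_determined_by:
  "finite J \<Longrightarrow> determined_by J f \<Longrightarrow> {\<omega>. f \<omega>} \<in> sets (bernoulli_field r)"
  using pred_PiM_determined_by[of J UNIV f "\<lambda>e. measure_pmf (bernoulli_pmf (r e))"]
  by (simp add: pred_def bernoulli_field_def space_PiM)

lemma sets_all_closed: "finite U \<Longrightarrow> {\<omega>. \<forall>e\<in>U. \<not> \<omega> e} \<in> sets (bernoulli_field r)"
  by (rule sets_determined_by) (auto simp: determined_by_def)

lemma indep_vars_bernoulli_field_coordinates:
  "prob_space.indep_vars (bernoulli_field r) (\<lambda>e. measure_pmf (bernoulli_pmf (r e))) (\<lambda>e \<omega>. \<omega> e) UNIV"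
proof -
  let ?M = "\<lambda>e. measure_pmf (bernoulli_pmf (r e))"
  interpret P: product_prob_space ?M UNIV
    by (rule product_prob_space_bernoulli)
  have coordinate: "(\<lambda>\<omega>. \<omega> e) \<in> measurable (PiM UNIV ?M) (?M e)" for e
    by (rule measurable_component_singleton) simp
  have "(\<Pi>\<^sub>M e\<in>UNIV. distr (PiM UNIV ?M) (?M e) (\<lambda>\<omega>. \<omega> e)) = PiM UNIV ?M"
    by (intro PiM_cong) (auto simp: P.PiM_component)
  then have "P.indep_vars ?M (\<lambda>e \<omega>. \<omega> e) UNIV"
    by (subst P.indep_vars_iff_distr_eq_PiM[OF _ coordinate]) (simp_all add: restrict_UNIV)
  then show ?thesis
    by (simp add: bernoulli_field_def)
qed

lemma indep_determined_by:
  assumes "finite J1" "finite J2" "J1 \<inter> J2 = {}" "determined_by J1 f1" "determined_by J2 f2"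
  shows "measure (bernoulli_field r) {\<omega>. f1 \<omega> \<and> f2 \<omega>} =
    measure (bernoulli_field r) {\<omega>. f1 \<omega>} * measure (bernoulli_field r) {\<omega>. f2 \<omega>}"
proof -
  let ?M = "\<lambda>e. measure_pmf (bernoulli_pmf (r e))"
  interpret prob_space "bernoulli_field r"
    by (rule prob_space_bernoulli_field)
  have indep: "indep_var (PiM J1 ?M) (\<lambda>\<omega>. restrict (\<lambda>e. \<omega> e) J1) (PiM J2 ?M) (\<lambda>\<omega>. restrict (\<lambda>e. \<omega> e) J2)"
    using indep_var_restrict[OF indep_vars_bernoulli_field_coordinates assms(3)] by simp
  define X1 where "X1 = {x \<in> space (PiM J1 ?M). f1 x}"
  define X2 where "X2 = {x \<in> space (PiM J2 ?M). f2 x}"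
  have "X1 \<in> sets (PiM J1 ?M)" "X2 \<in> sets (PiM J2 ?M)"
    unfolding X1_def X2_def
    using pred_PiM_determined_by[OF assms(1) order.refl assms(4), of ?M]
      pred_PiM_determined_by[OF assms(2) order.refl assms(5), of ?M]
    by (simp_all add: pred_def)
  moreover have "f1 (restrict \<omega> J1) = f1 \<omega>" "f2 (restrict \<omega> J2) = f2 \<omega>" for \<omega>
    by (rule determined_byD[OF assms(4)] determined_byD[OF assms(5)], simp)+
  then have "{\<omega>. f1 \<omega> \<and> f2 \<omega>} = (\<lambda>\<omega>. (restrict \<omega> J1, restrict \<omega> J2)) -` (X1 \<times> X2) \<inter> space (bernoulli_field r)"
    "{\<omega>. f1 \<omega>} = (\<lambda>\<omega>. restrict \<omega> J1) -` X1 \<inter> space (bernoulli_field r)"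
    "{\<omega>. f2 \<omega>} = (\<lambda>\<omega>. restrict \<omega> J2) -` X2 \<inter> space (bernoulli_field r)"
    by (auto simp: X1_def X2_def space_PiM)
  ultimately show ?thesis
    using indep_varD[OF indep] by simp
qed

lemma measure_bernoulli_field_all_closed:
  assumes "finite U" "\<And>e. e \<in> U \<Longrightarrow> 0 \<le> r e \<and> r e \<le> 1"
  shows "measure (bernoulli_field r) {\<omega>. \<forall>e\<in>U. \<not> \<omega> e} = (\<Prod>e\<in>U. 1 - r e)"
proof -
  interpret P: product_prob_space "\<lambda>e. measure_pmf (bernoulli_pmf (r e))" UNIV
    by (rule product_prob_space_bernoulli)
  have "emeasure (bernoulli_field r) {\<omega>. \<forall>e\<in>U. \<omega> e \<in> {False}} =
      (\<Prod>e\<in>U. emeasure (measure_pmf (bernoulli_pmf (r e))) {False})"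
    using P.emeasure_PiM_Collect[of U "\<lambda>_. {False}"] assms(1)
    by (simp add: bernoulli_field_def space_PiM)
  also have "\<dots> = ennreal (\<Prod>e\<in>U. 1 - r e)"
    using assms(2) by (simp add: emeasure_pmf_single prod_ennreal)
  finally show ?thesis
    by (simp add: measure_def prod_nonneg assms(2))
qed

section \<open>Renormalisation of an independent site percolation\<close>

lemma card_far_pairs: "card {(P, Q) \<in> sub_indices \<times> sub_indices. far P Q} \<le> 28561"
proof -
  have "card {(P, Q) \<in> sub_indices \<times> sub_indices. far P Q} \<le> card (sub_indices \<times> sub_indices)"
    by (intro card_mono) (auto simp: sub_indices_def)
  then show ?thesis
    by (simp add: sub_indices_def card_cartesian_product)
qed

lemma renormalised_bound_step: "28561 * ((1/2) ^ (k + 16)) ^ 2 \<le> ((1/2) ^ (Suc k + 16) :: real)"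
proof -
  have "((1/2) ^ (k + 16)) ^ 2 = ((1/2) ^ ((k + 16) * 2) :: real)"
    by (rule power_mult[symmetric])
  also have "(k + 16) * 2 = (k + 15) + (Suc k + 16)"
    by simp
  also have "(1/2::real) ^ ((k + 15) + (Suc k + 16)) = (1/2) ^ (k + 15) * (1/2) ^ (Suc k + 16)"
    by (rule power_add)
  finally have "28561 * ((1/2) ^ (k + 16)) ^ 2 = (28561 * (1/2) ^ (k + 15)) * ((1/2) ^ (Suc k + 16) :: real)"
    by (simp only: mult.assoc)
  also have "\<dots> \<le> (28561 * (1/2) ^ 15) * (1/2) ^ (Suc k + 16)"
    by (intro mult_right_mono mult_left_mono power_decreasing) auto
  also have "\<dots> \<le> 1 * (1/2) ^ (Suc k + 16)"
    by (intro mult_right_mono) (simp_all add: power_one_over)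
  finally show ?thesis by simp
qed

lemma summable_half_powers: "summable (\<lambda>k. (1/2::real) ^ (k + m))"
  unfolding power_add by (intro summable_mult2 summable_geometric) simp

locale independent_sites =
  fixes r :: "'e \<Rightarrow> real" and E :: "int \<times> int \<Rightarrow> 'e set"
    and X :: "('e \<Rightarrow> bool) \<Rightarrow> (int \<times> int) set"
  assumes finite_E: "finite (E x)"
    and disjoint_E: "x \<noteq> y \<Longrightarrow> E x \<inter> E y = {}"
    and site_determined: "determined_by (E x) (\<lambda>\<omega>. x \<in> X \<omega>)"
    and prob_site_closed: "measure (bernoulli_field r) {\<omega>. x \<notin> X \<omega>} \<le> 1 / 2 ^ 24"
begin

interpretation prob_space "bernoulli_field r"
  by (rule prob_space_bernoulli_field)

lemma bad_block_determined: "determined_by (\<Union>x\<in>block k c. E x) (\<lambda>\<omega>. bad_block k c (X \<omega>))"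
  unfolding determined_by_def
proof (intro allI impI)
  fix \<omega> \<omega>' :: "'e \<Rightarrow> bool"
  assume agree: "\<forall>e\<in>\<Union>x\<in>block k c. E x. \<omega> e = \<omega>' e"
  have "x \<in> X \<omega> \<longleftrightarrow> x \<in> X \<omega>'" if "x \<in> block k c" for x
    by (rule determined_byD[OF site_determined]) (use agree that in blast)
  then show "bad_block k c (X \<omega>) = bad_block k c (X \<omega>')"
    by (intro bad_block_cong) blast
qed

lemma finite_block_edges: "finite (\<Union>x\<in>block k c. E x)"
  using finite_block finite_E by blast

lemma sets_bad_block: "{\<omega>. bad_block k c (X \<omega>)} \<in> sets (bernoulli_field r)"
  by (rule sets_determined_by[OF finite_block_edges bad_block_determined])

lemma prob_far_pair_bad:
  assumes "far P Q"
  shows "measure (bernoulli_field r)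
      {\<omega>. bad_block k (subcorner k c P) (X \<omega>) \<and> bad_block k (subcorner k c Q) (X \<omega>)} =
    measure (bernoulli_field r) {\<omega>. bad_block k (subcorner k c P) (X \<omega>)} *
    measure (bernoulli_field r) {\<omega>. bad_block k (subcorner k c Q) (X \<omega>)}"
proof -
  have "(\<Union>x\<in>block k (subcorner k c P). E x) \<inter> (\<Union>y\<in>block k (subcorner k c Q). E y) = {}"
  proof (rule equals0I)
    fix e assume "e \<in> (\<Union>x\<in>block k (subcorner k c P). E x) \<inter> (\<Union>y\<in>block k (subcorner k c Q). E y)"
    then obtain x y where "x \<in> block k (subcorner k c P)" "y \<in> block k (subcorner k c Q)"
      "e \<in> E x" "e \<in> E y" by blast
    moreover from calculation(1,2) have "x \<noteq> y"
      using far_subblocks_disjoint[OF assms] by blast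
    ultimately show False
      using disjoint_E by blast
  qed
  then show ?thesis
    by (rule indep_determined_by[OF finite_block_edges finite_block_edges _
          bad_block_determined bad_block_determined])
qed

lemma prob_bad_block_0: "measure (bernoulli_field r) {\<omega>. bad_block 0 c (X \<omega>)} \<le> (1/2) ^ 16"
proof -
  have "{\<omega>. bad_block 0 c (X \<omega>)} = (\<Union>x\<in>block 0 c. {\<omega>. x \<notin> X \<omega>})"
    by auto
  moreover have "{\<omega>. x \<notin> X \<omega>} \<in> sets (bernoulli_field r)" for x
    using site_determined finite_E by (intro sets_determined_by determined_by_not)
  ultimately have "measure (bernoulli_field r) {\<omega>. bad_block 0 c (X \<omega>)} \<le>
      (\<Sum>x\<in>block 0 c. measure (bernoulli_field r) {\<omega>. x \<notin> X \<omega>})"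
    using finite_block by (simp add: finite_measure_subadditive_finite image_subset_iff)
  also have "\<dots> \<le> card (block 0 c) * (1 / 2 ^ 24)"
    using sum_mono[OF prob_site_closed] by simp
  also have "\<dots> = (1/2) ^ (0 + 16)"
    by (simp add: card_block_0 power_one_over)
  finally show ?thesis by simp
qed

lemma prob_bad_block: "measure (bernoulli_field r) {\<omega>. bad_block k c (X \<omega>)} \<le> (1/2) ^ (k + 16)"
proof (induction k arbitrary: c)
  case 0
  then show ?case using prob_bad_block_0 by simp
next
  case (Suc k)
  define F where "F = {(P, Q) \<in> sub_indices \<times> sub_indices. far P Q}"
  let ?bad = "\<lambda>P \<omega>. bad_block k (subcorner k c P) (X \<omega>)"
  have finite_F: "finite F"
    by (rule finite_subset[of _ "sub_indices \<times> sub_indices"]) (auto simp: F_def sub_indices_def)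
  define D where "D PQ = {\<omega>. ?bad (fst PQ) \<omega> \<and> ?bad (snd PQ) \<omega>}" for PQ
  have "D ` F \<subseteq> sets (bernoulli_field r)"
    unfolding D_def Collect_conj_eq by (auto intro: sets_bad_block)
  moreover have "{\<omega>. bad_block (Suc k) c (X \<omega>)} = (\<Union>PQ\<in>F. D PQ)"
    by (force simp: F_def D_def)
  ultimately have "measure (bernoulli_field r) {\<omega>. bad_block (Suc k) c (X \<omega>)} \<le>
      (\<Sum>PQ\<in>F. measure (bernoulli_field r) (D PQ))"
    using finite_measure_subadditive_finite[OF finite_F] by simp
  also have "\<dots> \<le> (\<Sum>PQ\<in>F. ((1/2) ^ (k + 16)) ^ 2)"
  proof (intro sum_mono)
    fix PQ assume "PQ \<in> F"
    then obtain P Q where PQ: "PQ = (P, Q)" "(P, Q) \<in> F" by (cases PQ) auto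
    have "measure (bernoulli_field r) {\<omega>. ?bad P \<omega> \<and> ?bad Q \<omega>} =
        measure (bernoulli_field r) {\<omega>. ?bad P \<omega>} * measure (bernoulli_field r) {\<omega>. ?bad Q \<omega>}"
      using PQ(2) by (intro prob_far_pair_bad) (simp add: F_def)
    also have "\<dots> \<le> ((1/2) ^ (k + 16)) ^ 2"
      unfolding power2_eq_square using Suc.IH by (intro mult_mono) auto
    finally show "measure (bernoulli_field r) (D PQ) \<le> ((1/2) ^ (k + 16)) ^ 2"
      by (simp add: D_def PQ(1))
  qed
  also have "\<dots> \<le> 28561 * ((1/2) ^ (k + 16)) ^ 2"
    using card_far_pairs by (simp add: F_def)
  also have "\<dots> \<le> (1/2) ^ (Suc k + 16)"
    by (rule renormalised_bound_step)
  finally show ?case .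
qed

lemma summable_prob_bad_nested:
  "summable (\<lambda>k. measure (bernoulli_field r) {\<omega>. bad_block k (nested_corner k) (X \<omega>)})"
proof (rule summable_comparison_test'[where N = 0])
  show "summable (\<lambda>k. (1/2::real) ^ (k + 16))"
    by (rule summable_half_powers)
  show "norm (measure (bernoulli_field r) {\<omega>. bad_block k (nested_corner k) (X \<omega>)}) \<le> (1/2) ^ (k + 16)"
    for k
    using prob_bad_block by simp
qed

lemma AE_eventually_good:
  "AE \<omega> in bernoulli_field r. \<forall>\<^sub>F k in sequentially. \<not> bad_block k (nested_corner k) (X \<omega>)"
  using borel_cantelli_AE1[OF sets_bad_block _ summable_prob_bad_nested] by (simp add: emeasure_eq_measure)

lemma prob_never_bad:
  "0 < measure (bernoulli_field r) {\<omega>. \<forall>k. \<not> bad_block k (nested_corner k) (X \<omega>)}"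
proof -
  let ?A = "\<lambda>k. {\<omega>. bad_block k (nested_corner k) (X \<omega>)}"
  have "measure (bernoulli_field r) (\<Union>k. ?A k) \<le> (\<Sum>k. measure (bernoulli_field r) (?A k))"
    using summable_prob_bad_nested by (intro finite_measure_subadditive_countably) (auto intro: sets_bad_block)
  also have "\<dots> \<le> (\<Sum>k. (1/2) ^ (k + 16))"
    using prob_bad_block by (intro suminf_le summable_prob_bad_nested summable_half_powers) auto
  also have "\<dots> = (\<Sum>k. (1/2) ^ k) * (1/2) ^ 16"
    unfolding power_add by (rule suminf_mult2[symmetric]) simp
  also have "\<dots> = 2 * (1/2) ^ 16"
    using suminf_geometric[of "1/2::real"] by simp
  also have "\<dots> = (1/2) ^ 15"
    by (simp add: power_one_over)
  finally have "measure (bernoulli_field r) (\<Union>k. ?A k) \<le> (1/2) ^ 15" .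
  moreover have "(\<Union>k. ?A k) \<in> sets (bernoulli_field r)"
    by (rule sets.countable_UN) (auto intro: sets_bad_block)
  moreover have "{\<omega>. \<forall>k. \<not> bad_block k (nested_corner k) (X \<omega>)} = space (bernoulli_field r) - (\<Union>k. ?A k)"
    by auto
  ultimately show ?thesis
    using prob_compl[of "\<Union>k. ?A k"] by (simp add: power_one_over)
qed

end

section \<open>Segments of the anisotropic lattice as sites\<close>

text \<open>Everything happens in the plane spanned by the \<open>\<int>\<close>-direction and one fixed
  \<open>\<int>\<^sup>s\<close>-direction (\<open>undefined\<close>).\<close>

definition plane_vertex :: "int \<Rightarrow> int \<Rightarrow> 'n vertex" where
  "plane_vertex z y = (z, (\<lambda>_. 0)(undefined := y))"

definition site_vertex :: "nat \<Rightarrow> int \<times> int \<Rightarrow> 'n vertex" where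
  "site_vertex l x = plane_vertex (fst x * int l) (snd x)"

text \<open>Site \<open>(a, b)\<close> stands for the segment of \<open>l\<close> \<open>\<int>\<close>-edges starting at \<open>site_vertex l (a, b)\<close>
  together with its rungs to the segment of site \<open>(a, b + 1)\<close>.\<close>

definition open_sites :: "nat \<Rightarrow> ('n edge \<Rightarrow> bool) \<Rightarrow> (int \<times> int) set" where
  "open_sites l \<omega> = {x. (\<forall>t<l. \<omega> (plane_vertex (fst x * int l + int t) (snd x), None)) \<and>
     (\<exists>t<l. \<omega> (plane_vertex (fst x * int l + int t) (snd x), Some undefined))}"

definition segment_edges :: "nat \<Rightarrow> int \<times> int \<Rightarrow> 'n edge set" where
  "segment_edges l x = (\<lambda>(t, d). (plane_vertex (fst x * int l + int t) (snd x), d)) `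
     ({..<l} \<times> {None, Some undefined})"

lemma step_plane_vertex [simp]:
  "step None (plane_vertex z y) = plane_vertex (z + 1) y"
  "step (Some undefined) (plane_vertex z y) = plane_vertex z (y + 1)"
  by (simp_all add: plane_vertex_def)

lemma plane_vertex_eq_iff [simp]: "plane_vertex z y = plane_vertex z' y' \<longleftrightarrow> z = z' \<and> y = y'"
  by (auto simp: plane_vertex_def fun_eq_iff dest: spec[of _ undefined])

lemma symp_open_adj: "symp (open_adj \<omega>)"
  by (auto simp: symp_def open_adj_def)

lemma open_adj_step: "\<omega> (x, d) \<Longrightarrow> open_adj \<omega> x (step d x)"
  by (auto simp: open_adj_def)

lemma segment_connected:
  assumes "\<forall>t<l. \<omega> (plane_vertex (a * int l + int t) b, None)" "t \<le> l"
  shows "(open_adj \<omega>)\<^sup>*\<^sup>* (plane_vertex (a * int l) b) (plane_vertex (a * int l + int t) b)"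
proof (rule rtranclp_int_chain[where f = "\<lambda>z. plane_vertex z b"])
  fix z assume "a * int l \<le> z" "z < a * int l + int t"
  then have "\<omega> (plane_vertex z b, None)"
    using assms spec[OF assms(1), of "nat (z - a * int l)"] by auto
  then show "open_adj \<omega> (plane_vertex z b) (plane_vertex (z + 1) b)"
    using open_adj_step[of \<omega> "plane_vertex z b" None] by simp
qed simp

lemma open_site_connects_right:
  assumes "x \<in> open_sites l \<omega>"
  shows "(open_adj \<omega>)\<^sup>*\<^sup>* (site_vertex l x) (site_vertex l (fst x + 1, snd x))"
  using segment_connected[of l \<omega> "fst x" "snd x" l] assms
  by (simp add: open_sites_def site_vertex_def distrib_right)

lemma open_sites_connect_up:
  assumes "x \<in> open_sites l \<omega>" "(fst x, snd x + 1) \<in> open_sites l \<omega>"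
  shows "(open_adj \<omega>)\<^sup>*\<^sup>* (site_vertex l x) (site_vertex l (fst x, snd x + 1))"
proof -
  obtain t where t: "t < l" "\<omega> (plane_vertex (fst x * int l + int t) (snd x), Some undefined)"
    using assms(1) by (auto simp: open_sites_def)
  have "(open_adj \<omega>)\<^sup>*\<^sup>* (site_vertex l x) (plane_vertex (fst x * int l + int t) (snd x))"
    using segment_connected[of l \<omega> "fst x" "snd x" t] assms(1) t(1)
    by (simp add: open_sites_def site_vertex_def)
  moreover have "open_adj \<omega> (plane_vertex (fst x * int l + int t) (snd x))
      (plane_vertex (fst x * int l + int t) (snd x + 1))"
    using open_adj_step[of \<omega> _ "Some undefined", OF t(2)] by simp
  moreover have "(open_adj \<omega>)\<^sup>*\<^sup>* (site_vertex l (fst x, snd x + 1))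
      (plane_vertex (fst x * int l + int t) (snd x + 1))"
    using segment_connected[of l \<omega> "fst x" "snd x + 1" t] assms(2) t(1)
    by (simp add: open_sites_def site_vertex_def)
  ultimately show ?thesis
    by (meson rtranclp.rtrancl_into_rtrancl rtranclp_trans sympD[OF symp_rtranclp[OF symp_open_adj]])
qed

lemma lattice_adj_open_sites_lift:
  assumes "lattice_adj (open_sites l \<omega>) x y"
  shows "(open_adj \<omega>)\<^sup>*\<^sup>* (site_vertex l x) (site_vertex l y)"
proof -
  have sym: "(open_adj \<omega>)\<^sup>*\<^sup>* u v \<Longrightarrow> (open_adj \<omega>)\<^sup>*\<^sup>* v u" for u v
    by (rule sympD[OF symp_rtranclp[OF symp_open_adj]])
  have open_sites: "x \<in> open_sites l \<omega>" "y \<in> open_sites l \<omega>"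
    using assms by (auto simp: lattice_adj_def)
  have "\<bar>fst x - fst y\<bar> + \<bar>snd x - snd y\<bar> = 1"
    using assms by (simp add: lattice_adj_def)
  then have "fst y = fst x + 1 \<and> snd y = snd x \<or> fst x = fst y + 1 \<and> snd x = snd y \<or>
      fst y = fst x \<and> snd y = snd x + 1 \<or> fst x = fst y \<and> snd x = snd y + 1"
    by arith
  then consider "y = (fst x + 1, snd x)" | "x = (fst y + 1, snd y)"
    | "y = (fst x, snd x + 1)" | "x = (fst y, snd y + 1)"
    by (metis prod.collapse)
  then show ?thesis
  proof cases
    case 1
    then show ?thesis using open_site_connects_right[OF open_sites(1)] by simp
  next
    case 2
    then show ?thesis using sym[OF open_site_connects_right[OF open_sites(2)]] by simp
  next
    case 3
    then show ?thesis using open_sites_connect_up[OF open_sites(1)] open_sites(2) by simp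
  next
    case 4
    then show ?thesis using sym[OF open_sites_connect_up[OF open_sites(2)]] open_sites(1) by simp
  qed
qed

lemma infinite_cluster_of_infinite_lattice_cluster:
  assumes "infinite {y. (lattice_adj (open_sites l \<omega>))\<^sup>*\<^sup>* x y}" "0 < l"
  shows "infinite (cluster \<omega> (site_vertex l x))"
proof -
  have "inj (site_vertex l :: int \<times> int \<Rightarrow> 'n vertex)"
    using assms(2) by (auto intro!: injI simp: site_vertex_def)
  then have "infinite (site_vertex l ` {y. (lattice_adj (open_sites l \<omega>))\<^sup>*\<^sup>* x y} :: 'n vertex set)"
    using assms(1) finite_imageD inj_on_subset by blast
  moreover have "site_vertex l ` {y. (lattice_adj (open_sites l \<omega>))\<^sup>*\<^sup>* x y} \<subseteq> cluster \<omega> (site_vertex l x)"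
    using rtranclp_map[OF _ lattice_adj_open_sites_lift] by (auto simp: cluster_def)
  ultimately show ?thesis
    using finite_subset by blast
qed

lemma perc_eq_bernoulli_field: "perc p q = bernoulli_field (\<lambda>e. if snd e = None then p else q)"
  by (simp add: perc_def bernoulli_field_def)

lemma finite_segment_edges: "finite (segment_edges l x)"
  by (simp add: segment_edges_def)

lemma segment_edges_disjoint:
  assumes "x \<noteq> y"
  shows "segment_edges l x \<inter> segment_edges l y = {}"
proof (rule equals0I)
  fix e assume "e \<in> segment_edges l x \<inter> segment_edges l y"
  then obtain t t' where t: "t < l" "t' < l"
    and eq: "fst x * int l + int t = fst y * int l + int t'" "snd x = snd y"
    by (auto simp: segment_edges_def)
  have "(a * int l + int s) div int l = a" if "s < l" for a s
    using that by simp
  then have "fst x = fst y"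
    using t eq(1) by metis
  then show False
    using assms eq(2) by (simp add: prod_eq_iff)
qed

lemma open_sites_determined: "determined_by (segment_edges l x) (\<lambda>\<omega>. x \<in> open_sites l \<omega>)"
  unfolding determined_by_def
proof (intro allI impI)
  fix \<omega> \<omega>' :: "'n edge \<Rightarrow> bool"
  assume agree: "\<forall>e\<in>segment_edges l x. \<omega> e = \<omega>' e"
  have "\<omega> (plane_vertex (fst x * int l + int t) (snd x), d) = \<omega>' (plane_vertex (fst x * int l + int t) (snd x), d)"
    if "t < l" "d \<in> {None, Some undefined}" for t d
    using that by (intro agree[rule_format]) (force simp: segment_edges_def)
  then show "x \<in> open_sites l \<omega> \<longleftrightarrow> x \<in> open_sites l \<omega>'"
    by (auto simp: open_sites_def)
qed

lemma prob_segment_closed: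
  assumes "0 \<le> p" "p \<le> 1" "0 \<le> q" "q \<le> 1"
  shows "measure (perc p q :: ('n edge \<Rightarrow> bool) measure) {\<omega>. x \<notin> open_sites l \<omega>}
    \<le> real l * (1 - p) + (1 - q) ^ l"
proof -
  let ?M = "bernoulli_field (\<lambda>e::'n edge. if snd e = None then p else q)"
  interpret prob_space ?M
    by (rule prob_space_bernoulli_field)
  define v :: "nat \<Rightarrow> 'n vertex" where "v t = plane_vertex (fst x * int l + int t) (snd x)" for t
  define A :: "nat \<Rightarrow> ('n edge \<Rightarrow> bool) set" where "A t = {\<omega>. \<forall>e\<in>{(v t, None)}. \<not> \<omega> e}" for t
  define U :: "'n edge set" where "U = (\<lambda>t. (v t, Some undefined)) ` {..<l}"
  have sets: "A t \<in> sets ?M" "{\<omega>. \<forall>e\<in>U. \<not> \<omega> e} \<in> sets ?M" for t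
    unfolding A_def U_def by (rule sets_all_closed, simp)+
  have "{\<omega>. x \<notin> open_sites l \<omega>} \<subseteq> (\<Union>t<l. A t) \<union> {\<omega>. \<forall>e\<in>U. \<not> \<omega> e}"
    by (auto simp: open_sites_def A_def U_def v_def)
  then have "measure ?M {\<omega>. x \<notin> open_sites l \<omega>} \<le> measure ?M ((\<Union>t<l. A t) \<union> {\<omega>. \<forall>e\<in>U. \<not> \<omega> e})"
    using sets by (intro finite_measure_mono sets.Un sets.finite_UN) auto
  also have "\<dots> \<le> (\<Sum>t<l. measure ?M (A t)) + measure ?M {\<omega>. \<forall>e\<in>U. \<not> \<omega> e}"
    using sets by (intro order.trans[OF measure_subadditive] add_right_mono finite_measure_subadditive_finite
        sets.finite_UN) auto
  also have "(\<Sum>t<l. measure ?M (A t)) = real l * (1 - p)"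
  proof -
    have "measure ?M (A t) = 1 - p" for t
      unfolding A_def
      using measure_bernoulli_field_all_closed[of "{(v t, None)}" "\<lambda>e. if snd e = None then p else q"] assms
      by simp
    then show ?thesis by simp
  qed
  also have "measure ?M {\<omega>. \<forall>e\<in>U. \<not> \<omega> e} = (\<Prod>e\<in>U. 1 - (if snd e = None then p else q))"
    using measure_bernoulli_field_all_closed[of U "\<lambda>e. if snd e = None then p else q"] assms
    by (simp add: U_def)
  also have "\<dots> = (\<Prod>e\<in>U. 1 - q)"
    by (rule prod.cong) (auto simp: U_def)
  also have "(\<Prod>e\<in>U. 1 - q) = (1 - q) ^ l"
  proof -
    have "card U = l"
      unfolding U_def by (subst card_image) (auto simp: inj_on_def v_def)
    then show ?thesis by simp
  qed
  finally show ?thesis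
    by (simp add: perc_eq_bernoulli_field)
qed

lemma pred_open_adj:
  "Measurable.pred (perc p q :: ('n::finite edge \<Rightarrow> bool) measure) (\<lambda>\<omega>. open_adj \<omega> x y)"
  unfolding open_adj_def perc_eq_bernoulli_field
  by (intro pred_intros_logic(5) pred_intros_countable(2) pred_intros_conj1' pred_bernoulli_field_coordinate)

lemma pred_open_adj_relpow:
  "Measurable.pred (perc p q :: ('n::finite edge \<Rightarrow> bool) measure) (\<lambda>\<omega>. (open_adj \<omega> ^^ m) x y)"
proof (induction m arbitrary: y)
  case 0
  then show ?case by simp
next
  case (Suc m)
  have "Measurable.pred (perc p q :: ('n edge \<Rightarrow> bool) measure)
      (\<lambda>\<omega>. \<exists>z. (open_adj \<omega> ^^ m) x z \<and> open_adj \<omega> z y)"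
    by (intro pred_intros_countable(2) pred_intros_logic(3) Suc.IH pred_open_adj)
  then show ?case by (simp add: relcompp_apply)
qed

text \<open>Quantifying over lists instead of finite sets keeps the event measurable.\<close>

lemma infinite_cluster_iff:
  "infinite (cluster \<omega> v) \<longleftrightarrow> (\<forall>xs. \<exists>y. y \<notin> set xs \<and> (\<exists>m. (open_adj \<omega> ^^ m) v y))"
proof
  assume "infinite (cluster \<omega> v)"
  then have "\<exists>y\<in>cluster \<omega> v. y \<notin> set xs" for xs
    by (meson finite_set finite_subset subsetI)
  then show "\<forall>xs. \<exists>y. y \<notin> set xs \<and> (\<exists>m. (open_adj \<omega> ^^ m) v y)"
    by (simp add: cluster_def rtranclp_power) blast
next
  assume escapes: "\<forall>xs. \<exists>y. y \<notin> set xs \<and> (\<exists>m. (open_adj \<omega> ^^ m) v y)"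
  show "infinite (cluster \<omega> v)"
  proof
    assume "finite (cluster \<omega> v)"
    then obtain xs where "set xs = cluster \<omega> v"
      using finite_list by blast
    moreover obtain y m where "y \<notin> set xs" "(open_adj \<omega> ^^ m) v y"
      using escapes by blast
    ultimately show False
      by (auto simp: cluster_def rtranclp_power)
  qed
qed

lemma sets_infinite_cluster:
  "{\<omega>. infinite (cluster \<omega> v)} \<in> sets (perc p q :: ('n::finite edge \<Rightarrow> bool) measure)"
proof -
  have "Measurable.pred (perc p q :: ('n edge \<Rightarrow> bool) measure)
      (\<lambda>\<omega>. \<forall>xs. \<exists>y. y \<notin> set xs \<and> (\<exists>m. (open_adj \<omega> ^^ m) v y))"
    by (intro pred_intros_countable pred_intros_conj1' pred_open_adj_relpow)
  then show ?thesis
    unfolding infinite_cluster_iff pred_def by (simp add: perc_eq_bernoulli_field)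
qed

lemma site_vertex_origin: "site_vertex l (0, 0) = origin"
  by (simp add: site_vertex_def plane_vertex_def origin_def fun_eq_iff)

lemma independent_sites_segments:
  assumes "0 \<le> p" "p \<le> 1" "0 \<le> q" "q \<le> 1"
    and reliable: "real l * (1 - p) + (1 - q) ^ l \<le> 1 / 2 ^ 24"
  shows "independent_sites (\<lambda>e::'n edge. if snd e = None then p else q) (segment_edges l) (open_sites l)"
proof
  show "measure (bernoulli_field (\<lambda>e::'n edge. if snd e = None then p else q))
      {\<omega>. x \<notin> open_sites l \<omega>} \<le> 1 / 2 ^ 24" for x
    using order_trans[OF prob_segment_closed[OF assms(1-4), of x l] reliable]
    by (simp only: perc_eq_bernoulli_field)
qed (simp_all add: finite_segment_edges segment_edges_disjoint open_sites_determined)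

lemma infinite_cluster_of_good_levels:
  assumes "\<forall>k\<ge>K. \<not> bad_block k (nested_corner k) (open_sites l \<omega>)"
    and "x \<in> core K (nested_corner K) (open_sites l \<omega>)" and "0 < l"
  shows "infinite (cluster \<omega> (site_vertex l x))"
  by (rule infinite_cluster_of_infinite_lattice_cluster[OF infinite_lattice_cluster[OF assms(1,2)] assms(3)])

lemma AE_infinite_cluster_of_reliable_segments:
  assumes "0 \<le> p" "p \<le> 1" "0 \<le> q" "q \<le> 1" "0 < l"
    and "real l * (1 - p) + (1 - q) ^ l \<le> 1 / 2 ^ 24"
  shows "AE \<omega> in (perc p q :: ('n edge \<Rightarrow> bool) measure). \<exists>x. infinite (cluster \<omega> x)"
proof -
  interpret independent_sites "\<lambda>e::'n edge. if snd e = None then p else q" "segment_edges l" "open_sites l"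
    using independent_sites_segments assms(1-4,6) .
  show ?thesis
    using AE_eventually_good unfolding perc_eq_bernoulli_field
  proof (rule AE_mp, intro AE_I2 impI)
    fix \<omega> :: "'n edge \<Rightarrow> bool"
    assume "\<forall>\<^sub>F k in sequentially. \<not> bad_block k (nested_corner k) (open_sites l \<omega>)"
    then obtain K where K: "\<forall>k\<ge>K. \<not> bad_block k (nested_corner k) (open_sites l \<omega>)"
      by (auto simp: eventually_sequentially)
    then obtain x where "x \<in> core K (nested_corner K) (open_sites l \<omega>)"
      using core_nonempty by blast
    then show "\<exists>x. infinite (cluster \<omega> x)"
      using infinite_cluster_of_good_levels[OF K _ assms(5)] by blast
  qed
qed

lemma theta_pos_of_reliable_segments:
  assumes "0 \<le> p" "p \<le> 1" "0 \<le> q" "q \<le> 1" "0 < l"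
    and "real l * (1 - p) + (1 - q) ^ l \<le> 1 / 2 ^ 24"
  shows "theta TYPE('n::finite) p q > 0"
proof -
  let ?M = "bernoulli_field (\<lambda>e::'n edge. if snd e = None then p else q)"
  interpret independent_sites "\<lambda>e::'n edge. if snd e = None then p else q" "segment_edges l" "open_sites l"
    using independent_sites_segments assms(1-4,6) .
  have "infinite (cluster \<omega> origin)"
    if "\<forall>k. \<not> bad_block k (nested_corner k) (open_sites l \<omega>)" for \<omega> :: "'n edge \<Rightarrow> bool"
    using infinite_cluster_of_good_levels[of 0 l \<omega> "(0, 0)"] that corner_in_block[of "(0, 0)" 0] assms(5)
    by (simp add: site_vertex_origin)
  then have "{\<omega>. \<forall>k. \<not> bad_block k (nested_corner k) (open_sites l \<omega>)} \<subseteq>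
      {\<omega>. infinite (cluster \<omega> (origin :: 'n vertex))}"
    by blast
  moreover have "{\<omega>. infinite (cluster \<omega> (origin :: 'n vertex))} \<in> sets ?M"
    using sets_infinite_cluster by (simp only: perc_eq_bernoulli_field)
  ultimately have "measure ?M {\<omega>. \<forall>k. \<not> bad_block k (nested_corner k) (open_sites l \<omega>)} \<le> theta TYPE('n) p q"
    unfolding theta_def perc_eq_bernoulli_field space_bernoulli_field
    by (simp add: finite_measure.finite_measure_mono[OF prob_space.axioms(1)[OF prob_space_bernoulli_field]])
  then show ?thesis
    using prob_never_bad by linarith
qed

lemma segment_length_exists:
  fixes e q \<delta> :: real
  assumes "0 < e" "e \<le> \<delta> / 4" "8 * e / \<delta>\<^sup>2 \<le> q" "q \<le> 1"
  shows "\<exists>l::nat. 0 < l \<and> real l * e + (1 - q) ^ l \<le> \<delta>"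
proof -
  have "0 < \<delta>" using assms(1,2) by linarith
  define y where "y = \<delta> / (2 * e)"
  have "2 \<le> y" using assms(1,2) by (simp add: y_def field_simps)
  define l where "l = nat \<lfloor>y\<rfloor>"
  have l: "y / 2 \<le> real l" "real l \<le> y" "0 < l"
    using \<open>2 \<le> y\<close> by (auto simp: l_def) linarith+
  have "real l * e \<le> \<delta> / 2"
    using mult_right_mono[OF l(2), of e] assms(1) by (simp add: y_def)
  moreover have "(1 - q) ^ l \<le> \<delta> / 2"
  proof -
    have "0 < 8 * e / \<delta>\<^sup>2"
      using assms(1) \<open>0 < \<delta>\<close> by simp
    then have "0 \<le> q"
      using assms(3) by linarith
    have "2 / \<delta> \<le> 8 * e / \<delta>\<^sup>2 * (y / 2)"
      using assms(1) \<open>0 < \<delta>\<close> by (simp add: y_def field_simps power2_eq_square)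
    also have "\<dots> \<le> q * real l"
      using assms(1,3) l(1) \<open>2 \<le> y\<close> \<open>0 \<le> q\<close> by (intro mult_mono) auto
    finally have ql: "2 / \<delta> \<le> q * real l" .
    have "(1 - q) ^ l \<le> exp (- q) ^ l"
      using assms(4) exp_ge_add_one_self[of "- q"] by (intro power_mono) auto
    also have "\<dots> = 1 / exp (q * real l)"
      by (simp add: exp_of_nat_mult[symmetric] exp_minus field_simps)
    also have "\<dots> \<le> 1 / (1 + q * real l)"
      using \<open>0 \<le> q\<close> by (intro divide_left_mono exp_ge_add_one_self) (auto intro!: mult_pos_pos add_pos_nonneg)
    also have "\<dots> \<le> \<delta> / 2"
      using ql \<open>0 < \<delta>\<close> mult_nonneg_nonneg[OF \<open>0 \<le> q\<close>, of "real l"]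
      by (simp add: field_simps)
    finally show ?thesis .
  qed
  ultimately show ?thesis
    using l(3) by (intro exI[of _ l]) auto
qed

lemma reliable_segment_length:
  fixes p q :: real
  assumes "1 - 1 / 2 ^ 26 < p" "p < 1" "q \<le> 1" "2 ^ 52 * (1 - p) / (1 + p) < q"
  obtains l where "0 < l" "real l * (1 - p) + (1 - q) ^ l \<le> 1 / 2 ^ 24"
proof -
  have "8 * (1 - p) / (1 / 2 ^ 24)\<^sup>2 = 2 ^ 52 * (1 - p) / 2"
    by (simp add: field_simps)
  also have "\<dots> \<le> 2 ^ 52 * (1 - p) / (1 + p)"
    using assms(1,2) by (intro divide_left_mono) auto
  finally have "8 * (1 - p) / (1 / 2 ^ 24)\<^sup>2 \<le> q"
    using assms(4) by linarith
  then show ?thesis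
    using segment_length_exists[of "1 - p" "1 / 2 ^ 24" q] assms(1-3) that by auto
qed

theorem theorem2:
  assumes "CARD('n::finite) \<ge> 2"
  shows "\<exists>\<alpha>::real. \<exists>p0::real. \<alpha> > 0 \<and> p0 < 1 \<and>
           (\<forall>p q. p0 < p \<and> p < 1 \<and> q \<le> 1 \<and> q > \<alpha> * (1 - p) / (1 + p) \<longrightarrow>
              (AE \<omega> in (perc p q :: ('n edge \<Rightarrow> bool) measure).
                   \<exists>x. infinite (cluster \<omega> x))
              \<and> theta TYPE('n) p q > 0)"
proof -
  have "(AE \<omega> in (perc p q :: ('n edge \<Rightarrow> bool) measure). \<exists>x. infinite (cluster \<omega> x))
      \<and> theta TYPE('n) p q > 0"
    if p: "1 - 1 / 2 ^ 26 < p" "p < 1" and q: "q \<le> 1" "2 ^ 52 * (1 - p) / (1 + p) < q" for p q :: real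
  proof -
    obtain l where l: "0 < l" "real l * (1 - p) + (1 - q) ^ l \<le> 1 / 2 ^ 24"
      using reliable_segment_length[OF p q] .
    have "0 < 2 ^ 52 * (1 - p) / (1 + p)"
      using p by (intro divide_pos_pos) auto
    then have "0 \<le> q"
      using q(2) by linarith
    moreover have "0 \<le> p" "p \<le> 1"
      using p by auto
    ultimately show ?thesis
      using AE_infinite_cluster_of_reliable_segments theta_pos_of_reliable_segments q(1) l by blast
  qed
  then show ?thesis
    by (intro exI[of _ "2 ^ 52"] exI[of _ "1 - 1 / 2 ^ 26"]) auto
qed

end
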